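(* Let $a>0$, $\alpha\in[0,1)$, $f\in\mathcal C_a$ and $\eta\in(0,1)$. Then $\mathrm{Sh}_\alpha(f^{\pm\eta})=(\mathrm{Sh}_\alpha(f))^{\pm\eta}$.
   Context: For $b>0$, $\mathcal C_b$ is the set of $C^1$ functions $f:\mathbb R\to\mathbb R$ that are even, satisfy $f(s)=|s|$ for $|s|\ge b$ and are strictly convex on $[-b,b]$. For any function $g:\mathbb R\to\mathbb R$, $g^{\pm\eta}(s)=(1\pm\frac\eta2)g\big(s/(1\pm\frac\eta2)\big)$; if $f\in\mathcal C_a$ then $f^{\pm\eta}\in\mathcal C_{(2\pm\eta)a/2}$. For $f\in\mathcal C_b$: $F_\alpha(s)=f(s)-\alpha s$, $x_\alpha^+=(f')^{-1}(\alpha)\in[0,b)$ (inverse of $f':[-b,b]\to[-1,1]$); let $F_\alpha^{-1}$ be the inverse of $F_\alpha|_{[x_\alpha^+,\infty)}$, $\phi=F_\alpha^{-1}\circ F_\alpha$, $\delta_x=(1-\alpha)^{-1}F_\alpha(x)-\phi(x)$, $s_\alpha=x_\alpha^++\delta_{x_\alpha^+}$; $x\mapsto x+\delta_x$ is an increasing bijection $(-\infty,x_\alpha^+]\to(-\infty,s_\alpha]$ with inverse $\tau$. Define $\mathrm{Sh}_\alpha(f)(x)=\alpha x+F_\alpha(\tau(x))$ for $x\le s_\alpha$ and $=x$ for $x>s_\alpha$. The identity holds for both signs. *)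

theory Defs
  imports "HOL-Analysis.Analysis"
begin

definition strictly_convex_on :: "real set \<Rightarrow> (real \<Rightarrow> real) \<Rightarrow> bool" where
  "strictly_convex_on S g \<longleftrightarrow>
     (\<forall>x\<in>S. \<forall>y\<in>S. \<forall>t. x \<noteq> y \<and> 0 < t \<and> t < 1 \<longrightarrow>
        g ((1 - t) * x + t * y) < (1 - t) * g x + t * g y)"

definition classC :: "real \<Rightarrow> (real \<Rightarrow> real) set" where
  "classC b = {f. (\<forall>x. f differentiable (at x)) \<and> continuous_on UNIV (deriv f)
      \<and> (\<forall>s. f (- s) = f s) \<and> (\<forall>s. b \<le> \<bar>s\<bar> \<longrightarrow> f s = \<bar>s\<bar>)
      \<and> strictly_convex_on {-b..b} f}"

text \<open>g^{\<pm>\<eta>} with c = 1 \<pm> \<eta>/2: s \<mapsto> c * g (s / c).\<close>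
definition dil :: "real \<Rightarrow> (real \<Rightarrow> real) \<Rightarrow> real \<Rightarrow> real" where
  "dil c g = (\<lambda>s. c * g (s / c))"

definition Falpha :: "(real \<Rightarrow> real) \<Rightarrow> real \<Rightarrow> real \<Rightarrow> real" where
  "Falpha f \<alpha> s = f s - \<alpha> * s"

definition xplus :: "(real \<Rightarrow> real) \<Rightarrow> real \<Rightarrow> real" where
  "xplus f \<alpha> = (THE x. deriv f x = \<alpha>)"

definition Finv :: "(real \<Rightarrow> real) \<Rightarrow> real \<Rightarrow> real \<Rightarrow> real" where
  "Finv f \<alpha> y = (THE t. xplus f \<alpha> \<le> t \<and> Falpha f \<alpha> t = y)"

definition phi :: "(real \<Rightarrow> real) \<Rightarrow> real \<Rightarrow> real \<Rightarrow> real" where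
  "phi f \<alpha> x = Finv f \<alpha> (Falpha f \<alpha> x)"

definition delta :: "(real \<Rightarrow> real) \<Rightarrow> real \<Rightarrow> real \<Rightarrow> real" where
  "delta f \<alpha> x = Falpha f \<alpha> x / (1 - \<alpha>) - phi f \<alpha> x"

definition salpha :: "(real \<Rightarrow> real) \<Rightarrow> real \<Rightarrow> real" where
  "salpha f \<alpha> = xplus f \<alpha> + delta f \<alpha> (xplus f \<alpha>)"

definition tau :: "(real \<Rightarrow> real) \<Rightarrow> real \<Rightarrow> real \<Rightarrow> real" where
  "tau f \<alpha> y = (THE x. x \<le> xplus f \<alpha> \<and> x + delta f \<alpha> x = y)"

definition Sh :: "real \<Rightarrow> (real \<Rightarrow> real) \<Rightarrow> real \<Rightarrow> real" where
  "Sh \<alpha> f x = (if x \<le> salpha f \<alpha> then \<alpha> * x + Falpha f \<alpha> (tau f \<alpha> x) else x)"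

end

theory Submission
  imports Defs
begin

text \<open>Each ingredient of \<open>Sh\<^sub>\<alpha>\<close> (the point \<open>x\<^sub>\<alpha>\<^sup>+\<close>, the inverse of the right
  branch of \<open>F\<^sub>\<alpha>\<close>, the shift \<open>\<delta>\<close> and the inverse \<open>\<tau>\<close> of \<open>x \<mapsto> x + \<delta>\<^sub>x\<close>) is the
  unique solution of an equation that is homogeneous of degree one under
  \<open>g \<mapsto> c g(\<cdot>/c)\<close>, so for \<open>dil c f\<close> it is \<open>c\<close> times the ingredient
  of \<open>f\<close> at the rescaled point, and hence so is \<open>Sh\<^sub>\<alpha>\<close>. The work is to show that
  these solutions exist and are unique (otherwise the definite descriptions would be
  unrelated junk): \<open>f'\<close> is strictly increasing on \<open>[-a, a]\<close> by strict convexity and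
  equals \<open>\<plusminus>1\<close> outside, so \<open>F\<^sub>\<alpha>\<close> has a unique minimum at \<open>x\<^sub>\<alpha>\<^sup>+\<close>, and since \<open>f' \<le> 1\<close>
  the shift \<open>\<delta>\<close> is nondecreasing left of \<open>x\<^sub>\<alpha>\<^sup>+\<close> and vanishes left of \<open>-a\<close>.\<close>

lemma The_scale:
  fixes c :: real
  assumes "c \<noteq> 0" and "\<exists>!x. P x"
  shows "(THE x. P (x / c)) = c * (THE x. P x)"
proof (rule the_equality)
  show "P (c * (THE x. P x) / c)"
    using assms by (simp add: theI')
next
  fix x assume "P (x / c)"
  then have "x / c = (THE x. P x)"
    using assms(2) by (simp add: the1_equality)
  then show "x = c * (THE x. P x)"
    using assms(1) by (simp add: field_simps)
qed

lemma strictly_convex_on_imp_convex_on: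
  assumes "strictly_convex_on S g" and "convex S"
  shows "convex_on S g"
proof (intro convex_onI assms(2))
  fix t x y :: real assume "0 < t" "t < 1" "x \<in> S" "y \<in> S"
  then have "x \<noteq> y \<Longrightarrow> g ((1 - t) * x + t * y) < (1 - t) * g x + t * g y"
    using assms(1) unfolding strictly_convex_on_def by blast
  then show "g ((1 - t) *\<^sub>R x + t *\<^sub>R y) \<le> (1 - t) * g x + t * g y"
    by (cases "x = y") (auto simp: algebra_simps)
qed

lemma strictly_convex_on_deriv_less:
  fixes g :: "real \<Rightarrow> real"
  assumes conv: "strictly_convex_on S g" "convex S"
    and xy: "x \<in> interior S" "y \<in> interior S" "x < y"
    and diff: "g differentiable at x" "g differentiable at y"
  shows "deriv g x < deriv g y"
proof -
  define m where "m = (x + y) / 2"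
  have S: "x \<in> S" "y \<in> S" "m \<in> S"
    using xy interior_subset convexD[OF conv(2), of x y "1/2" "1/2"]
    by (auto simp: m_def field_simps)
  have "g ((1 - 1/2) * x + 1/2 * y) < (1 - 1/2) * g x + 1/2 * g y"
    by (rule conv(1)[unfolded strictly_convex_on_def, rule_format]) (use S xy(3) in auto)
  then have mid: "g m < (g x + g y) / 2"
    by (simp add: m_def field_simps)
  have tangent: "g m - g z \<ge> deriv g z * (m - z)"
    if "z \<in> interior S" "g differentiable at z" for z
    using that S(3) convex_connected[OF conv(2)]
      convex_on_imp_above_tangent[OF strictly_convex_on_imp_convex_on[OF conv]]
    by (metis DERIV_deriv_iff_real_differentiable has_field_derivative_at_within)
  have "deriv g x * (y - x) / 2 \<le> g m - g x" "- (deriv g y * (y - x) / 2) \<le> g m - g y"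
    using tangent[OF xy(1) diff(1)] tangent[OF xy(2) diff(2)]
    by (simp_all add: m_def field_simps)
  with mid have "deriv g x * (y - x) < deriv g y * (y - x)"
    by argo
  then show ?thesis
    using xy(3) by simp
qed

lemma deriv_dil:
  assumes "c \<noteq> 0" and "g differentiable at (x / c)"
  shows "deriv (dil c g) x = deriv g (x / c)"
proof -
  have "(g has_real_derivative deriv g (x / c)) (at (x / c))"
    using assms(2) by (simp add: DERIV_deriv_iff_real_differentiable)
  moreover have "((\<lambda>s. s / c) has_real_derivative 1 / c) (at x)"
    using assms(1) by (auto intro!: derivative_eq_intros)
  ultimately have
    "((\<lambda>s. c * g (s / c)) has_real_derivative c * (deriv g (x / c) * (1 / c))) (at x)"
    by (intro DERIV_cmult DERIV_chain2)
  then show ?thesis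
    using assms(1) unfolding dil_def by (simp add: DERIV_imp_deriv)
qed

lemma Falpha_dil:
  assumes "c \<noteq> 0"
  shows "Falpha (dil c g) \<alpha> s = c * Falpha g \<alpha> (s / c)"
  using assms by (simp add: Falpha_def dil_def algebra_simps)

locale classC_function =
  fixes a :: real and f :: "real \<Rightarrow> real"
  assumes in_classC: "f \<in> classC a" and pos: "0 < a"
begin

lemma differentiable: "f differentiable at x"
  using in_classC by (simp add: classC_def)

lemma has_deriv: "(f has_real_derivative deriv f x) (at x)"
  using differentiable by (simp add: DERIV_deriv_iff_real_differentiable)

lemma isCont_deriv: "isCont (deriv f) x"
  using in_classC by (simp add: classC_def continuous_on_eq_continuous_at)

lemma eq_abs: "a \<le> \<bar>s\<bar> \<Longrightarrow> f s = \<bar>s\<bar>"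
  using in_classC by (simp add: classC_def)

lemma deriv_eq_1:
  assumes "a \<le> x" shows "deriv f x = 1"
proof (rule continuous_constant_on_closure[of "{a<..}" "deriv f"])
  show "continuous_on (closure {a<..}) (deriv f)"
    using isCont_deriv by (simp add: continuous_at_imp_continuous_on)
  show "x \<in> closure {a<..}"
    using assms by simp
next
  fix y :: real assume y: "y \<in> {a<..}"
  have "s = f s" if "s \<in> {a<..}" for s
    using that pos eq_abs[of s] by simp
  then have "(f has_real_derivative 1) (at y)"
    by (rule has_field_derivative_transform_within_open[OF DERIV_ident open_greaterThan y])
  then show "deriv f y = 1"
    by (rule DERIV_imp_deriv)
qed

lemma deriv_eq_minus_1:
  assumes "x \<le> -a" shows "deriv f x = -1"
proof (rule continuous_constant_on_closure[of "{..<-a}" "deriv f"])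
  show "continuous_on (closure {..<-a}) (deriv f)"
    using isCont_deriv by (simp add: continuous_at_imp_continuous_on)
  show "x \<in> closure {..<-a}"
    using assms by simp
next
  fix y :: real assume y: "y \<in> {..<-a}"
  have "((\<lambda>s. - s) has_real_derivative -1) (at y)"
    by (auto intro!: derivative_eq_intros)
  moreover have "- s = f s" if "s \<in> {..<-a}" for s
    using that pos eq_abs[of s] by simp
  ultimately have "(f has_real_derivative -1) (at y)"
    by (rule has_field_derivative_transform_within_open[OF _ open_lessThan y])
  then show "deriv f y = -1"
    by (rule DERIV_imp_deriv)
qed

lemma deriv_strict_mono: "-a < x \<Longrightarrow> x < y \<Longrightarrow> y < a \<Longrightarrow> deriv f x < deriv f y"
  using in_classC by (intro strictly_convex_on_deriv_less[of "{-a..a}" f] differentiable)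
    (auto simp: classC_def)

lemma deriv_le_1: "deriv f x \<le> 1"
proof -
  have "deriv f x \<le> 1" if x: "-a < x" "x < a" for x
  proof (rule tendsto_lowerbound)
    show "(deriv f \<longlongrightarrow> 1) (at_left a)"
      using isCont_deriv[of a] deriv_eq_1[of a] by (simp add: isCont_def filterlim_at_split)
    show "\<forall>\<^sub>F y in at_left a. deriv f x \<le> deriv f y"
      using eventually_at_left_real[OF x(2)]
      by eventually_elim (use x deriv_strict_mono in \<open>auto intro: less_imp_le\<close>)
  qed simp
  then show ?thesis
    using deriv_eq_1[of x] deriv_eq_minus_1[of x] by (cases "-a < x \<and> x < a") auto
qed

lemma increment_le:
  assumes "x \<le> y" shows "f y - f x \<le> y - x"
proof -
  have "x - f x \<le> y - f y"
  proof (rule DERIV_nonneg_imp_nondecreasing[OF assms])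
    fix t
    show "\<exists>d. ((\<lambda>t. t - f t) has_real_derivative d) (at t) \<and> 0 \<le> d"
      using deriv_le_1[of t] by (auto intro!: derivative_eq_intros has_deriv)
  qed
  then show ?thesis by simp
qed

end

locale classC_tilted = classC_function +
  fixes \<alpha> :: real
  assumes alpha_nonneg: "0 \<le> \<alpha>" and alpha_less_1: "\<alpha> < 1"
begin

lemma deriv_eq_alpha_imp_interior:
  assumes "deriv f x = \<alpha>" shows "-a < x" "x < a"
  using assms deriv_eq_1[of x] deriv_eq_minus_1[of x] alpha_nonneg alpha_less_1
  by force+

lemma ex1_deriv_eq_alpha: "\<exists>!x. deriv f x = \<alpha>"
proof (rule ex_ex1I)
  have "continuous_on {-a..a} (deriv f)"
    using isCont_deriv by (simp add: continuous_at_imp_continuous_on)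
  then show "\<exists>x. deriv f x = \<alpha>"
    using IVT'[of "deriv f" "-a" \<alpha> a] pos alpha_nonneg alpha_less_1
      deriv_eq_1[of a] deriv_eq_minus_1[of "-a"] by auto
next
  fix x y assume "deriv f x = \<alpha>" "deriv f y = \<alpha>"
  then show "x = y"
    using deriv_eq_alpha_imp_interior[of x] deriv_eq_alpha_imp_interior[of y]
      deriv_strict_mono[of x y] deriv_strict_mono[of y x]
    by (cases x y rule: linorder_cases) auto
qed

lemma deriv_xplus: "deriv f (xplus f \<alpha>) = \<alpha>"
  unfolding xplus_def using ex1_deriv_eq_alpha by (rule theI')

lemma xplus_bounds: "-a < xplus f \<alpha>" "xplus f \<alpha> < a"
  using deriv_eq_alpha_imp_interior[OF deriv_xplus] by auto

lemma deriv_less_alpha: "x < xplus f \<alpha> \<Longrightarrow> deriv f x < \<alpha>"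
  using deriv_strict_mono[of x "xplus f \<alpha>"] deriv_xplus xplus_bounds
    deriv_eq_minus_1[of x] alpha_nonneg by (cases "-a < x") auto

lemma deriv_greater_alpha: "xplus f \<alpha> < x \<Longrightarrow> \<alpha> < deriv f x"
  using deriv_strict_mono[of "xplus f \<alpha>" x] deriv_xplus xplus_bounds
    deriv_eq_1[of x] alpha_less_1 by (cases "x < a") auto

lemma has_deriv_Falpha: "(Falpha f \<alpha> has_real_derivative deriv f x - \<alpha>) (at x)"
proof -
  have "Falpha f \<alpha> = (\<lambda>s. f s - \<alpha> * s)"
    by (simp add: Falpha_def fun_eq_iff)
  then show ?thesis
    by (auto intro!: derivative_eq_intros has_deriv)
qed

lemma continuous_on_Falpha: "continuous_on S (Falpha f \<alpha>)"
  using has_deriv_Falpha by (meson DERIV_isCont continuous_at_imp_continuous_on)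

lemma Falpha_strict_mono:
  assumes "xplus f \<alpha> \<le> x" and "x < y" shows "Falpha f \<alpha> x < Falpha f \<alpha> y"
proof (rule DERIV_pos_imp_increasing_open[OF assms(2) _ continuous_on_Falpha])
  fix t assume "x < t" "t < y"
  then show "\<exists>d. (Falpha f \<alpha> has_real_derivative d) (at t) \<and> 0 < d"
    using assms has_deriv_Falpha[of t] deriv_greater_alpha[of t] by auto
qed

lemma Falpha_strict_antimono:
  assumes "x < y" and "y \<le> xplus f \<alpha>" shows "Falpha f \<alpha> y < Falpha f \<alpha> x"
proof (rule DERIV_neg_imp_decreasing_open[OF assms(1) _ continuous_on_Falpha])
  fix t assume "x < t" "t < y"
  then show "\<exists>d. (Falpha f \<alpha> has_real_derivative d) (at t) \<and> d < 0"
    using assms has_deriv_Falpha[of t] deriv_less_alpha[of t] by auto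
qed

lemma Falpha_xplus_le: "Falpha f \<alpha> (xplus f \<alpha>) \<le> Falpha f \<alpha> x"
  using Falpha_strict_mono[of "xplus f \<alpha>" x] Falpha_strict_antimono[of x "xplus f \<alpha>"]
  by (cases x "xplus f \<alpha>" rule: linorder_cases) auto

lemma Falpha_right: "a \<le> t \<Longrightarrow> Falpha f \<alpha> t = (1 - \<alpha>) * t"
  using eq_abs[of t] pos by (simp add: Falpha_def algebra_simps)

lemma Falpha_left: "t \<le> -a \<Longrightarrow> Falpha f \<alpha> t = (1 + \<alpha>) * (- t)"
  using eq_abs[of t] pos by (simp add: Falpha_def algebra_simps)

lemma Falpha_right_surj:
  assumes "Falpha f \<alpha> (xplus f \<alpha>) \<le> y"
  shows "\<exists>t. xplus f \<alpha> \<le> t \<and> t \<le> max a (y / (1 - \<alpha>)) \<and> Falpha f \<alpha> t = y"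
proof (rule IVT'[OF assms _ _ continuous_on_Falpha])
  define T where "T = max a (y / (1 - \<alpha>))"
  have "y = (1 - \<alpha>) * (y / (1 - \<alpha>))"
    using alpha_less_1 by simp
  also have "\<dots> \<le> (1 - \<alpha>) * T"
    using alpha_less_1 by (intro mult_left_mono) (auto simp: T_def)
  also have "\<dots> = Falpha f \<alpha> T"
    by (simp add: Falpha_right T_def)
  finally show "y \<le> Falpha f \<alpha> (max a (y / (1 - \<alpha>)))"
    by (simp add: T_def)
  show "xplus f \<alpha> \<le> max a (y / (1 - \<alpha>))"
    using xplus_bounds by simp
qed

lemma Falpha_right_inj:
  "xplus f \<alpha> \<le> t \<Longrightarrow> xplus f \<alpha> \<le> u \<Longrightarrow> Falpha f \<alpha> t = Falpha f \<alpha> u \<Longrightarrow> t = u"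
  using Falpha_strict_mono[of t u] Falpha_strict_mono[of u t]
  by (cases t u rule: linorder_cases) auto

lemma ex1_Falpha_right:
  "Falpha f \<alpha> (xplus f \<alpha>) \<le> y \<Longrightarrow> \<exists>!t. xplus f \<alpha> \<le> t \<and> Falpha f \<alpha> t = y"
  using Falpha_right_surj Falpha_right_inj by blast

lemma Finv_eqI: "xplus f \<alpha> \<le> t \<Longrightarrow> Falpha f \<alpha> t = y \<Longrightarrow> Finv f \<alpha> y = t"
  unfolding Finv_def by (rule the_equality) (auto intro: Falpha_right_inj)

lemma phi_on_right_branch: "xplus f \<alpha> \<le> phi f \<alpha> x" "Falpha f \<alpha> (phi f \<alpha> x) = Falpha f \<alpha> x"
  using theI'[OF ex1_Falpha_right[OF Falpha_xplus_le[of x]]]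
  by (simp_all add: phi_def Finv_def)

lemma delta_left:
  assumes "x \<le> -a" shows "delta f \<alpha> x = 0"
proof -
  define t where "t = (1 + \<alpha>) * (- x) / (1 - \<alpha>)"
  have "(1 - \<alpha>) * a \<le> (1 + \<alpha>) * (- x)"
    using assms pos alpha_nonneg by (intro mult_mono) auto
  then have "a \<le> t"
    unfolding t_def using alpha_less_1 by (subst pos_le_divide_eq) (auto simp: mult.commute)
  then have "Falpha f \<alpha> t = Falpha f \<alpha> x"
    using alpha_less_1 by (simp add: Falpha_right Falpha_left[OF assms] t_def)
  with \<open>a \<le> t\<close> have "phi f \<alpha> x = t"
    unfolding phi_def using xplus_bounds by (intro Finv_eqI) auto
  then show ?thesis
    by (simp add: delta_def Falpha_left[OF assms] t_def del: mult_minus_right)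
qed

text \<open>Since \<open>f' \<le> 1\<close>, \<open>F\<^sub>\<alpha>\<close> has slope at most \<open>1 - \<alpha>\<close> on the right branch, so \<open>\<phi>\<close>
  decreases at least as fast as \<open>F\<^sub>\<alpha> / (1 - \<alpha>)\<close>.\<close>
lemma delta_mono:
  assumes "x < y" and "y \<le> xplus f \<alpha>"
  shows "delta f \<alpha> x \<le> delta f \<alpha> y"
proof -
  define p q where "p = phi f \<alpha> x" and "q = phi f \<alpha> y"
  have "Falpha f \<alpha> y < Falpha f \<alpha> x"
    using Falpha_strict_antimono[OF assms] .
  then have "Falpha f \<alpha> q < Falpha f \<alpha> p"
    by (simp add: p_def q_def phi_on_right_branch)
  then have "q \<le> p"
    using Falpha_strict_mono[of p q] phi_on_right_branch(1)[of x] by (force simp: p_def)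
  then have "Falpha f \<alpha> p - Falpha f \<alpha> q \<le> (1 - \<alpha>) * (p - q)"
    using increment_le[of q p] by (simp add: Falpha_def algebra_simps)
  then have "(Falpha f \<alpha> x - Falpha f \<alpha> y) / (1 - \<alpha>) \<le> p - q"
    using alpha_less_1 by (simp add: p_def q_def phi_on_right_branch pos_divide_le_eq mult.commute)
  then show ?thesis
    by (simp add: delta_def p_def q_def diff_divide_distrib)
qed

lemma continuous_on_phi:
  assumes "L \<le> xplus f \<alpha>"
  shows "continuous_on {L..xplus f \<alpha>} (phi f \<alpha>)"
proof -
  define M where "M = max a (Falpha f \<alpha> L / (1 - \<alpha>))"
  have "continuous_on (Falpha f \<alpha> ` {xplus f \<alpha>..M}) (Finv f \<alpha>)"
    by (rule continuous_on_inv[OF continuous_on_Falpha compact_Icc]) (auto intro: Finv_eqI)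
  moreover have "Falpha f \<alpha> ` {L..xplus f \<alpha>} \<subseteq> Falpha f \<alpha> ` {xplus f \<alpha>..M}"
  proof
    fix y assume "y \<in> Falpha f \<alpha> ` {L..xplus f \<alpha>}"
    then obtain x where x: "L \<le> x" "x \<le> xplus f \<alpha>" "y = Falpha f \<alpha> x"
      by auto
    obtain t where t: "xplus f \<alpha> \<le> t" "t \<le> max a (y / (1 - \<alpha>))" "Falpha f \<alpha> t = y"
      using Falpha_right_surj[OF Falpha_xplus_le] x(3) by blast
    have "y \<le> Falpha f \<alpha> L"
      using Falpha_strict_antimono[of L x] x by (cases "L = x") auto
    then have "y / (1 - \<alpha>) \<le> Falpha f \<alpha> L / (1 - \<alpha>)"
      using alpha_less_1 by (simp add: divide_right_mono)
    then have "t \<le> M"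
      using t(2) by (auto simp: M_def)
    then show "y \<in> Falpha f \<alpha> ` {xplus f \<alpha>..M}"
      using t by auto
  qed
  ultimately have "continuous_on {L..xplus f \<alpha>} (\<lambda>x. Finv f \<alpha> (Falpha f \<alpha> x))"
    by (rule continuous_on_compose2[OF _ continuous_on_Falpha])
  then show ?thesis
    by (simp add: phi_def[abs_def])
qed

lemma continuous_on_shift:
  assumes "L \<le> xplus f \<alpha>"
  shows "continuous_on {L..xplus f \<alpha>} (\<lambda>x. x + delta f \<alpha> x)"
  unfolding delta_def using alpha_less_1
  by (intro continuous_intros continuous_on_Falpha continuous_on_phi assms) auto

lemma ex1_shift_eq:
  assumes "y \<le> salpha f \<alpha>"
  shows "\<exists>!x. x \<le> xplus f \<alpha> \<and> x + delta f \<alpha> x = y"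
proof (rule ex_ex1I)
  show "\<exists>x. x \<le> xplus f \<alpha> \<and> x + delta f \<alpha> x = y"
  proof (cases "y \<le> -a")
    case True
    then show ?thesis
      using delta_left xplus_bounds by (intro exI[of _ y]) auto
  next
    case False
    then show ?thesis
      using IVT'[of "\<lambda>x. x + delta f \<alpha> x" "-a" y "xplus f \<alpha>"] assms
        delta_left[of "-a"] xplus_bounds continuous_on_shift[of "-a"]
      by (force simp: salpha_def)
  qed
next
  fix x x'
  assume "x \<le> xplus f \<alpha> \<and> x + delta f \<alpha> x = y" "x' \<le> xplus f \<alpha> \<and> x' + delta f \<alpha> x' = y"
  then show "x = x'"
    using delta_mono[of x x'] delta_mono[of x' x]
    by (cases x x' rule: linorder_cases) auto
qed

context
  fixes c :: real
  assumes c_pos: "0 < c"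
begin

lemma xplus_dil: "xplus (dil c f) \<alpha> = c * xplus f \<alpha>"
  using c_pos The_scale[OF _ ex1_deriv_eq_alpha, of c]
  by (simp add: xplus_def deriv_dil differentiable)

lemma Finv_dil:
  assumes "Falpha f \<alpha> (xplus f \<alpha>) \<le> y / c"
  shows "Finv (dil c f) \<alpha> y = c * Finv f \<alpha> (y / c)"
proof -
  have "Finv (dil c f) \<alpha> y = (THE t. xplus f \<alpha> \<le> t / c \<and> Falpha f \<alpha> (t / c) = y / c)"
    using c_pos by (simp add: Finv_def xplus_dil Falpha_dil pos_le_divide_eq mult.commute
        nonzero_eq_divide_eq)
  also have "\<dots> = c * Finv f \<alpha> (y / c)"
    unfolding Finv_def using c_pos by (simp add: The_scale[OF _ ex1_Falpha_right[OF assms]])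
  finally show ?thesis .
qed

lemma delta_dil: "delta (dil c f) \<alpha> x = c * delta f \<alpha> (x / c)"
proof -
  have "phi (dil c f) \<alpha> x = c * phi f \<alpha> (x / c)"
    using c_pos Falpha_xplus_le by (simp add: phi_def Falpha_dil Finv_dil)
  then show ?thesis
    using c_pos by (simp add: delta_def Falpha_dil right_diff_distrib)
qed

lemma salpha_dil: "salpha (dil c f) \<alpha> = c * salpha f \<alpha>"
  using c_pos by (simp add: salpha_def xplus_dil delta_dil distrib_left)

lemma tau_dil:
  assumes "y / c \<le> salpha f \<alpha>"
  shows "tau (dil c f) \<alpha> y = c * tau f \<alpha> (y / c)"
proof -
  have "tau (dil c f) \<alpha> y = (THE x. x / c \<le> xplus f \<alpha> \<and> x / c + delta f \<alpha> (x / c) = y / c)"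
    using c_pos by (simp add: tau_def xplus_dil delta_dil pos_divide_le_eq mult.commute
        field_simps)
  also have "\<dots> = c * tau f \<alpha> (y / c)"
    unfolding tau_def using c_pos by (simp add: The_scale[OF _ ex1_shift_eq[OF assms]])
  finally show ?thesis .
qed

lemma Sh_dil: "Sh \<alpha> (dil c f) = dil c (Sh \<alpha> f)"
proof
  fix x
  have "x \<le> salpha (dil c f) \<alpha> \<longleftrightarrow> x / c \<le> salpha f \<alpha>"
    using c_pos by (simp add: salpha_dil pos_divide_le_eq mult.commute)
  then show "Sh \<alpha> (dil c f) x = dil c (Sh \<alpha> f) x"
    unfolding dil_def[of c "Sh \<alpha> f"] Sh_def
    using c_pos by (simp add: Falpha_dil tau_dil algebra_simps)
qed

end

end

theorem proposition3p25:
  fixes a \<alpha> \<eta> :: real and f :: "real \<Rightarrow> real"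
  assumes "a > 0" and "0 \<le> \<alpha>" and "\<alpha> < 1" and "f \<in> classC a"
    and "0 < \<eta>" and "\<eta> < 1"
  shows "Sh \<alpha> (dil (1 + \<eta> / 2) f) = dil (1 + \<eta> / 2) (Sh \<alpha> f)
     \<and> Sh \<alpha> (dil (1 - \<eta> / 2) f) = dil (1 - \<eta> / 2) (Sh \<alpha> f)"
proof -
  interpret classC_tilted a f \<alpha>
    using assms by unfold_locales
  show ?thesis
    using assms by (simp add: Sh_dil)
qed

end
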